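(* Let $\alpha,\beta,\gamma,x$ be non-negative integers with $(\alpha,\beta,\gamma,x)\neq(0,0,0,0)$. Then for every integer $n\ge0$, $$T_{n+1}^{1,x}(\alpha,\beta,\gamma)=\gamma\,T_n^{1,x}(\alpha,\beta,\gamma-\alpha)+x\beta\sum_{k=0}^{n}\binom{n}{k}T_{n-k}^{1,x}(\alpha,\beta,\gamma)\,T_k^{1,x}(\alpha,\beta,\beta-\alpha).$$
   Context: For complex numbers $c,\alpha$ and an integer $n\ge 0$ let $(c|\alpha)_n=\prod_{i=0}^{n-1}(c-i\alpha)$, with $(c|\alpha)_0=1$. Let $E_{\alpha,c}(t)=\sum_{n\ge 0}(c|\alpha)_n\,t^n/n!$, viewed as a formal power series in $t$. It equals $(1+\alpha t)^{c/\alpha}$ if $\alpha\neq0$ and $e^{ct}$ if $\alpha=0$. For complex $\alpha,\beta,\gamma,x$ and a non-negative integer $\lambda$, the numbers $T_n^{\lambda,x}(\alpha,\beta,\gamma)$, $n\ge0$, are defined by the formal power series identity $$\sum_{n\ge0}T_n^{\lambda,x}(\alpha,\beta,\gamma)\frac{t^n}{n!}=E_{\alpha,\gamma}(t)\,\bigl(1-x(E_{\alpha,\beta}(t)-1)\bigr)^{-\lambda}.$$ The third argument may be any complex number, e.g. $\gamma-\alpha$ or $\beta-\alpha$. *)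

theory Defs
  imports Complex_Main "HOL-Computational_Algebra.Formal_Power_Series"
begin

definition gen_fall :: "complex \<Rightarrow> complex \<Rightarrow> nat \<Rightarrow> complex" where
  "gen_fall c \<alpha> n = (\<Prod>i<n. (c - of_nat i * \<alpha>))"

definition E_fps :: "complex \<Rightarrow> complex \<Rightarrow> complex fps" where
  "E_fps \<alpha> c = Abs_fps (\<lambda>n. gen_fall c \<alpha> n / fact n)"

text \<open>The base series has constant term 1, so the fps inverse is the genuine inverse.\<close>
definition T :: "nat \<Rightarrow> complex \<Rightarrow> complex \<Rightarrow> complex \<Rightarrow> complex \<Rightarrow> nat \<Rightarrow> complex" where
  "T lam x \<alpha> \<beta> \<gamma> n =
     fact n * fps_nth (E_fps \<alpha> \<gamma> * inverse ((1 - fps_const x * (E_fps \<alpha> \<beta> - 1)) ^ lam)) n"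

end

theory Submission
  imports Defs
begin

text \<open>Write \<open>E c\<close> for \<open>E_fps \<alpha> c\<close>, \<open>D = 1 - x (E \<beta> - 1)\<close> and
  \<open>F c = E c / D\<close>, the exponential generating function of \<open>T 1 x \<alpha> \<beta> c\<close>.
  Since \<open>E c' = c E (c - \<alpha>)\<close>, we get \<open>(1 / D)' = x \<beta> E (\<beta> - \<alpha>) / D\<^sup>2\<close> and hence the
  Riccati-type equation \<open>F \<gamma>' = \<gamma> F (\<gamma> - \<alpha>) + x \<beta> F (\<beta> - \<alpha>) F \<gamma>\<close>. Comparing
  coefficients of \<open>t\<^sup>n / n!\<close>, with the binomial convolution for the product, gives the
  recurrence for all complex parameters.\<close>

unbundle fps_syntax

lemma fact_Suc_mult_fps_nth_Suc:
  fixes f :: "'a::{comm_semiring_1,semiring_char_0} fps"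
  shows "fact (Suc n) * f $ Suc n = fact n * fps_deriv f $ n"
  by (simp add: algebra_simps)

lemma fact_mult_fps_mult_nth:
  fixes f g :: "'a::{comm_semiring_1,semiring_char_0} fps"
  shows "fact n * (f * g) $ n =
    (\<Sum>k=0..n. of_nat (n choose k) * (fact (n - k) * g $ (n - k)) * (fact k * f $ k))"
  unfolding fps_mult_nth sum_distrib_left
proof (rule sum.cong[OF refl])
  fix k assume "k \<in> {0..n}"
  then have "(fact n :: 'a) = of_nat (fact k * fact (n - k) * (n choose k))"
    by (simp only: atLeastAtMost_iff binomial_fact_lemma of_nat_fact)
  then show "fact n * (f $ k * g $ (n - k)) =
      of_nat (n choose k) * (fact (n - k) * g $ (n - k)) * (fact k * f $ k)"
    by (simp add: algebra_simps)
qed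

lemma gen_fall_Suc: "gen_fall c \<alpha> (Suc n) = c * gen_fall (c - \<alpha>) \<alpha> n"
  unfolding gen_fall_def
  by (subst prod.lessThan_Suc_shift) (simp add: algebra_simps)

lemma E_fps_nth_0 [simp]: "E_fps \<alpha> c $ 0 = 1"
  by (simp add: E_fps_def gen_fall_def)

lemma fps_deriv_E_fps: "fps_deriv (E_fps \<alpha> c) = fps_const c * E_fps \<alpha> (c - \<alpha>)"
proof (rule fps_ext)
  fix n
  have "fps_deriv (E_fps \<alpha> c) $ n = of_nat (Suc n) * (gen_fall c \<alpha> (Suc n) / fact (Suc n))"
    by (simp add: E_fps_def)
  also have "\<dots> = c * (gen_fall (c - \<alpha>) \<alpha> n / fact n)"
    by (simp add: gen_fall_Suc field_simps del: of_nat_Suc)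
  finally show "fps_deriv (E_fps \<alpha> c) $ n = (fps_const c * E_fps \<alpha> (c - \<alpha>)) $ n"
    by (simp add: E_fps_def)
qed

definition T1_egf :: "complex \<Rightarrow> complex \<Rightarrow> complex \<Rightarrow> complex \<Rightarrow> complex fps" where
  "T1_egf x \<alpha> \<beta> \<gamma> = E_fps \<alpha> \<gamma> * inverse (1 - fps_const x * (E_fps \<alpha> \<beta> - 1))"

lemma T_1_eq_fact_mult_T1_egf_nth: "T 1 x \<alpha> \<beta> \<gamma> n = fact n * T1_egf x \<alpha> \<beta> \<gamma> $ n"
  by (simp add: T_def T1_egf_def)

lemma fps_deriv_T1_egf:
  "fps_deriv (T1_egf x \<alpha> \<beta> \<gamma>) =
     fps_const \<gamma> * T1_egf x \<alpha> \<beta> (\<gamma> - \<alpha>)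
   + fps_const (x * \<beta>) * (T1_egf x \<alpha> \<beta> (\<beta> - \<alpha>) * T1_egf x \<alpha> \<beta> \<gamma>)"
proof -
  define D where "D = 1 - fps_const x * (E_fps \<alpha> \<beta> - 1)"
  have T1_egf_eq: "T1_egf x \<alpha> \<beta> c = E_fps \<alpha> c * inverse D" for c
    by (simp add: T1_egf_def D_def)
  have D_nth_0: "D $ 0 \<noteq> 0"
    by (simp add: D_def)
  have deriv_D: "fps_deriv D = - (fps_const x * (fps_const \<beta> * E_fps \<alpha> (\<beta> - \<alpha>)))"
    by (simp add: D_def fps_deriv_E_fps)
  have "fps_deriv (T1_egf x \<alpha> \<beta> \<gamma>) =
      fps_const \<gamma> * E_fps \<alpha> (\<gamma> - \<alpha>) * inverse D
    + E_fps \<alpha> \<gamma> * (fps_const x * (fps_const \<beta> * E_fps \<alpha> (\<beta> - \<alpha>)) * (inverse D)\<^sup>2)"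
    by (simp add: T1_egf_eq fps_deriv_E_fps fps_inverse_deriv[OF D_nth_0] deriv_D)
  also have "\<dots> = fps_const \<gamma> * T1_egf x \<alpha> \<beta> (\<gamma> - \<alpha>)
    + fps_const (x * \<beta>) * (T1_egf x \<alpha> \<beta> (\<beta> - \<alpha>) * T1_egf x \<alpha> \<beta> \<gamma>)"
    by (simp add: T1_egf_eq power2_eq_square algebra_simps
        flip: fps_const_mult)
  finally show ?thesis .
qed

lemma T_1_Suc:
  "T 1 x \<alpha> \<beta> \<gamma> (Suc n) =
     \<gamma> * T 1 x \<alpha> \<beta> (\<gamma> - \<alpha>) n
   + x * \<beta> * (\<Sum>k=0..n. of_nat (n choose k) * T 1 x \<alpha> \<beta> \<gamma> (n - k) * T 1 x \<alpha> \<beta> (\<beta> - \<alpha>) k)"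
proof -
  have "T 1 x \<alpha> \<beta> \<gamma> (Suc n) = fact n * fps_deriv (T1_egf x \<alpha> \<beta> \<gamma>) $ n"
    by (simp only: T_1_eq_fact_mult_T1_egf_nth fact_Suc_mult_fps_nth_Suc)
  also have "\<dots> = \<gamma> * (fact n * T1_egf x \<alpha> \<beta> (\<gamma> - \<alpha>) $ n)
      + x * \<beta> * (fact n * (T1_egf x \<alpha> \<beta> (\<beta> - \<alpha>) * T1_egf x \<alpha> \<beta> \<gamma>) $ n)"
    by (simp add: fps_deriv_T1_egf algebra_simps)
  finally show ?thesis
    by (simp only: fact_mult_fps_mult_nth T_1_eq_fact_mult_T1_egf_nth)
qed

theorem theorem3:
  fixes \<alpha> \<beta> \<gamma> x :: nat and n :: nat
  assumes "(\<alpha>, \<beta>, \<gamma>, x) \<noteq> (0, 0, 0, 0)"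
  shows "T 1 (of_nat x) (of_nat \<alpha>) (of_nat \<beta>) (of_nat \<gamma>) (Suc n) =
           of_nat \<gamma> * T 1 (of_nat x) (of_nat \<alpha>) (of_nat \<beta>) (of_nat \<gamma> - of_nat \<alpha>) n
         + of_nat x * of_nat \<beta> *
           (\<Sum>k=0..n. of_nat (n choose k)
              * T 1 (of_nat x) (of_nat \<alpha>) (of_nat \<beta>) (of_nat \<gamma>) (n - k)
              * T 1 (of_nat x) (of_nat \<alpha>) (of_nat \<beta>) (of_nat \<beta> - of_nat \<alpha>) k)"
  by (rule T_1_Suc)

end
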